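(* Let $\mathcal{G}$ be a multi-player Markov game and suppose there exists a stationary product policy $\pi^\star=(\pi^\star_1,\dots,\pi^\star_n)$ such that $\sum_{i=1}^nV_i^{\pi^\star_i,\pi_{-i}}(\rho)-\sum_{i=1}^nV_i^{\pi}(\rho)\ge0$ for every stationary product policy $\pi$. Then, with $x^\star$ the parameterization of $\pi^\star$, $$\langle x-x^\star,F_{\mathcal{G}}(x)\circ\Lambda(x,x^\star)\rangle\ge0\quad\text{for all }x\in\mathcal{X}.$$ In particular, if $\mathcal{G}$ admits a single controller $c$, then $\langle x-x^\star,F_{\mathcal{G}}(x)\circ A(x)\circ W(x^\star)\rangle\ge0$ for all $x\in\mathcal{X}$, where $A_i(x)[s,a_i]=1$ and $W_i(x^\star)[s,a_i]=1$ for $i\ne c$, while $A_c(x)[s,a_c]=(\tilde d^{\pi_c}_\rho[s])^{-1}$ and $W_c(x^\star)[s,a_c]=\tilde d^{\pi^\star_c}_\rho[s]$.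
   Context: A multi-player Markov game: players $[n]$; finite states $\mathcal{S}$; finite nonempty action sets $\mathcal{A}_i$, $\mathcal{A}=\prod_i\mathcal{A}_i$; transitions $\mathbb{P}(s'\mid s,a)$ with $\zeta:=\min_{(s,a)}(1-\sum_{s'}\mathbb{P}(s'\mid s,a))>0$ (the remaining mass is the termination probability); rewards $R_i:\mathcal{S}\times\mathcal{A}\to[-1,1]$; initial distribution $\rho$ with full support. Stationary policies $\pi_i:\mathcal{S}\to\Delta(\mathcal{A}_i)$ are directly parameterized by $x_i\in\Delta(\mathcal{A}_i)^{\mathcal{S}}$, $x_{i,s}[a_i]=\pi_i(a_i\mid s)$; $\mathcal{X}=\prod_i\Delta(\mathcal{A}_i)^{\mathcal{S}}$. $V_i^\pi(s)=\mathbb{E}_\pi[\sum_{h=0}^HR_i(s_h,a_h)\mid s_0=s]$ ($H$ the last step before termination), $V_i^\pi(\rho)=\mathbb{E}_{s\sim\rho}V_i^\pi(s)$. $F_{\mathcal{G}}(x)=-(\nabla_{x_1}V_1^\pi(\rho),\dots,\nabla_{x_n}V_n^\pi(\rho))$. Unnormalized visitation $\tilde d^\pi_\rho[s]=\mathbb{E}_{s_0\sim\rho}\sum_{h\ge0}\mathbb{P}^\pi(s_h=s\mid s_0)$. $\Lambda(x,x^\star)=(\Lambda_1,\dots,\Lambda_n)$ with $\Lambda_i(x,x^\star)[s,a_i]=\tilde d^{\pi^\star_i,\pi_{-i}}_\rho[s]/\tilde d^{\pi}_\rho[s]$. Single controller $c$: $\mathbb{P}(\cdot\mid s,a)$ depends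 on $a$ only via $a_c$; then $\tilde d^\pi_\rho$ depends only on $\pi_c$ and is written $\tilde d^{\pi_c}_\rho$. $\circ$ is the coordinatewise product. *)

theory Defs
  imports "HOL-Analysis.Analysis"
begin

text \<open>P s a s' is the transition probability, the missing mass is the termination probability.\<close>

definition joint :: "('p \<Rightarrow> 'a set) \<Rightarrow> ('p \<Rightarrow> 'a) set" where
  "joint Act = Pi\<^sub>E UNIV Act"

definition markov_game ::
  "('p::finite \<Rightarrow> 'a set) \<Rightarrow> ('s::finite \<Rightarrow> ('p \<Rightarrow> 'a) \<Rightarrow> 's \<Rightarrow> real)
   \<Rightarrow> ('p \<Rightarrow> 's \<Rightarrow> ('p \<Rightarrow> 'a) \<Rightarrow> real) \<Rightarrow> ('s \<Rightarrow> real) \<Rightarrow> bool" where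
  "markov_game Act P R \<rho> \<longleftrightarrow>
     (\<forall>i. finite (Act i) \<and> Act i \<noteq> {}) \<and>
     (\<forall>s a s'. a \<in> joint Act \<longrightarrow> P s a s' \<ge> 0) \<and>
     (\<exists>\<zeta>>0. \<forall>s a. a \<in> joint Act \<longrightarrow> 1 - (\<Sum>s'\<in>UNIV. P s a s') \<ge> \<zeta>) \<and>
     (\<forall>i s a. a \<in> joint Act \<longrightarrow> -1 \<le> R i s a \<and> R i s a \<le> 1) \<and>
     (\<forall>s. \<rho> s > 0) \<and> (\<Sum>s\<in>UNIV. \<rho> s) = 1"

text \<open>Direct parameterization: x i s a = \<pi>_i(a | s); set to 0 for a outside Act i.\<close>
definition policies :: "('p \<Rightarrow> 'a set) \<Rightarrow> ('p \<Rightarrow> 's \<Rightarrow> 'a \<Rightarrow> real) set" where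
  "policies Act = {x. \<forall>i s. (\<forall>a. 0 \<le> x i s a) \<and> (\<forall>a. a \<notin> Act i \<longrightarrow> x i s a = 0)
                          \<and> (\<Sum>a\<in>Act i. x i s a) = 1}"

definition pol :: "('p::finite \<Rightarrow> 's \<Rightarrow> 'a \<Rightarrow> real) \<Rightarrow> 's \<Rightarrow> ('p \<Rightarrow> 'a) \<Rightarrow> real" where
  "pol x s a = (\<Prod>i\<in>UNIV. x i s (a i))"

definition Ppi :: "('p::finite \<Rightarrow> 'a set) \<Rightarrow> ('s \<Rightarrow> ('p \<Rightarrow> 'a) \<Rightarrow> 's \<Rightarrow> real)
    \<Rightarrow> ('p \<Rightarrow> 's \<Rightarrow> 'a \<Rightarrow> real) \<Rightarrow> 's \<Rightarrow> 's \<Rightarrow> real" where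
  "Ppi Act P x s s' = (\<Sum>a\<in>joint Act. pol x s a * P s a s')"

text \<open>stepdist h s = P^\<pi>(s_h = s), with s_0 \<sim> \<rho> (sub-probability, accounting for termination).\<close>
primrec stepdist :: "('p::finite \<Rightarrow> 'a set) \<Rightarrow> ('s::finite \<Rightarrow> ('p \<Rightarrow> 'a) \<Rightarrow> 's \<Rightarrow> real)
    \<Rightarrow> ('s \<Rightarrow> real) \<Rightarrow> ('p \<Rightarrow> 's \<Rightarrow> 'a \<Rightarrow> real) \<Rightarrow> nat \<Rightarrow> 's \<Rightarrow> real" where
  "stepdist Act P \<rho> x 0 s' = \<rho> s'"
| "stepdist Act P \<rho> x (Suc h) s' = (\<Sum>s\<in>UNIV. stepdist Act P \<rho> x h s * Ppi Act P x s s')"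

definition dvis where
  "dvis Act P \<rho> x s = (\<Sum>h. stepdist Act P \<rho> x h s)"

definition Vval where
  "Vval Act P R \<rho> x i =
     (\<Sum>h. \<Sum>s\<in>UNIV. stepdist Act P \<rho> x h s * (\<Sum>a\<in>joint Act. pol x s a * R i s a))"

definition Fgrad where
  "Fgrad Act P R \<rho> x i s ai =
     - deriv (\<lambda>t. Vval Act P R \<rho> (x(i := (x i)(s := (x i s)(ai := x i s ai + t)))) i) 0"

definition Lam where
  "Lam Act P \<rho> x xs i s ai = dvis Act P \<rho> (x(i := xs i)) s / dvis Act P \<rho> x s"

definition single_controller :: "('p \<Rightarrow> 'a set) \<Rightarrow> ('s \<Rightarrow> ('p \<Rightarrow> 'a) \<Rightarrow> 's \<Rightarrow> real) \<Rightarrow> 'p \<Rightarrow> bool" where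
  "single_controller Act P c \<longleftrightarrow>
     (\<forall>s a a'. a \<in> joint Act \<longrightarrow> a' \<in> joint Act \<longrightarrow> a c = a' c \<longrightarrow> P s a = P s a')"

definition Aw where
  "Aw Act P \<rho> c x i s ai = (if i = c then 1 / dvis Act P \<rho> x s else 1)"

definition Ww where
  "Ww Act P \<rho> c xs i s ai = (if i = c then dvis Act P \<rho> xs s else 1)"

end

(* By the policy gradient theorem the partial derivative of V_i at x in the coordinate (s, a_i)
   is d^x(s) Q_i^x(s, a_i), and by the performance difference lemma
     V_i(x*_i, x_-i) - V_i(x) = sum_s d^(x*_i, x_-i)(s) sum_a_i (x*_i - x_i)(s, a_i) Q_i^x(s, a_i).
   The weight Lambda_i trades d^x for d^(x*_i, x_-i), so the weighted pairing equals
   sum_i (V_i(x*_i, x_-i) - V_i(x)) >= 0.  Under a single controller c the visitation measure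
   depends on x_c alone, whence Lambda = A o W.
   The partial derivative is taken along a perturbation of one coordinate, which leaves the
   simplex; the termination margin keeps the perturbed kernel a strict contraction, and on it
   V is an explicit rational function of the step. *)

theory Submission
  imports Defs
begin

lemma stepdist_abs_sum_le:
  assumes "\<And>s. (\<Sum>s'\<in>UNIV. \<bar>Ppi Act P y s s'\<bar>) \<le> \<gamma>" and "0 \<le> \<gamma>"
  shows "(\<Sum>s\<in>UNIV. \<bar>stepdist Act P \<mu> y h s\<bar>) \<le> \<gamma> ^ h * (\<Sum>s\<in>UNIV. \<bar>\<mu> s\<bar>)"
proof (induction h)
  case 0
  then show ?case by simp
next
  case (Suc h)
  have "(\<Sum>s'\<in>UNIV. \<bar>stepdist Act P \<mu> y (Suc h) s'\<bar>)
      \<le> (\<Sum>s'\<in>UNIV. \<Sum>s\<in>UNIV. \<bar>stepdist Act P \<mu> y h s\<bar> * \<bar>Ppi Act P y s s'\<bar>)"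
    by (auto intro!: sum_mono order.trans[OF sum_abs] simp: abs_mult)
  also have "\<dots> = (\<Sum>s\<in>UNIV. \<bar>stepdist Act P \<mu> y h s\<bar> * (\<Sum>s'\<in>UNIV. \<bar>Ppi Act P y s s'\<bar>))"
    by (subst sum.swap) (simp add: sum_distrib_left)
  also have "\<dots> \<le> (\<Sum>s\<in>UNIV. \<bar>stepdist Act P \<mu> y h s\<bar>) * \<gamma>"
    unfolding sum_distrib_right by (intro sum_mono mult_left_mono assms) auto
  also have "\<dots> \<le> \<gamma> ^ Suc h * (\<Sum>s\<in>UNIV. \<bar>\<mu> s\<bar>)"
    using mult_right_mono[OF Suc assms(2)] by (simp add: ac_simps)
  finally show ?case .
qed

lemma stepdist_indicator_Suc:
  "stepdist Act P (indicator {s0}) y (Suc h) s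
     = (\<Sum>s'\<in>UNIV. Ppi Act P y s0 s' * stepdist Act P (indicator {s'}) y h s)"
proof (induction h arbitrary: s)
  case 0
  show ?case by (simp add: indicator_def if_distrib cong: if_cong)
next
  case (Suc h)
  have "stepdist Act P (indicator {s0}) y (Suc (Suc h)) s
     = (\<Sum>u\<in>UNIV. (\<Sum>s'\<in>UNIV. Ppi Act P y s0 s' * stepdist Act P (indicator {s'}) y h u) * Ppi Act P y u s)"
    by (simp only: stepdist.simps(2)[of _ _ _ _ "Suc h"] Suc)
  also have "\<dots> = (\<Sum>s'\<in>UNIV. Ppi Act P y s0 s' * stepdist Act P (indicator {s'}) y (Suc h) s)"
    by (simp add: sum_distrib_right sum_distrib_left mult.assoc) (rule sum.swap)
  finally show ?case .
qed

lemma stepdist_cong: "Ppi Act P x = Ppi Act P y \<Longrightarrow> stepdist Act P \<mu> x h = stepdist Act P \<mu> y h"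
  by (induction h) auto

definition state_value ::
  "('p::finite \<Rightarrow> 'a set) \<Rightarrow> ('s::finite \<Rightarrow> ('p \<Rightarrow> 'a) \<Rightarrow> 's \<Rightarrow> real)
    \<Rightarrow> ('p \<Rightarrow> 's \<Rightarrow> 'a \<Rightarrow> real) \<Rightarrow> ('s \<Rightarrow> real) \<Rightarrow> 's \<Rightarrow> real" where
  "state_value Act P y f s0 = (\<Sum>s\<in>UNIV. dvis Act P (indicator {s0}) y s * f s)"

definition expected_reward ::
  "('p::finite \<Rightarrow> 'a set) \<Rightarrow> ('p \<Rightarrow> 's \<Rightarrow> ('p \<Rightarrow> 'a) \<Rightarrow> real)
    \<Rightarrow> ('p \<Rightarrow> 's \<Rightarrow> 'a \<Rightarrow> real) \<Rightarrow> 'p \<Rightarrow> 's \<Rightarrow> real" where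
  "expected_reward Act R y i s = (\<Sum>a\<in>joint Act. pol y s a * R i s a)"

context
  fixes Act :: "'p::finite \<Rightarrow> 'a set"
    and P :: "'s::finite \<Rightarrow> ('p \<Rightarrow> 'a) \<Rightarrow> 's \<Rightarrow> real"
    and y :: "'p \<Rightarrow> 's \<Rightarrow> 'a \<Rightarrow> real"
    and \<gamma> :: real
  assumes Ppi_abs_row_le: "\<And>s. (\<Sum>s'\<in>UNIV. \<bar>Ppi Act P y s s'\<bar>) \<le> \<gamma>"
    and \<gamma>_nonneg: "0 \<le> \<gamma>" and \<gamma>_less_1: "\<gamma> < 1"
begin

lemma summable_stepdist: "summable (\<lambda>h. stepdist Act P \<mu> y h s)"
proof (rule summable_comparison_test)
  show "\<exists>N. \<forall>h\<ge>N. norm (stepdist Act P \<mu> y h s) \<le> \<gamma> ^ h * (\<Sum>s\<in>UNIV. \<bar>\<mu> s\<bar>)"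
  proof (intro exI allI impI)
    fix h
    have "\<bar>stepdist Act P \<mu> y h s\<bar> \<le> (\<Sum>s\<in>UNIV. \<bar>stepdist Act P \<mu> y h s\<bar>)"
      by (rule member_le_sum) auto
    then show "norm (stepdist Act P \<mu> y h s) \<le> \<gamma> ^ h * (\<Sum>s\<in>UNIV. \<bar>\<mu> s\<bar>)"
      using stepdist_abs_sum_le[OF Ppi_abs_row_le \<gamma>_nonneg] by (simp add: order.trans)
  qed
  show "summable (\<lambda>h. \<gamma> ^ h * (\<Sum>s\<in>UNIV. \<bar>\<mu> s\<bar>))"
    using \<gamma>_nonneg \<gamma>_less_1 by (intro summable_mult2 summable_geometric) auto
qed

lemma dvis_split_head:
  "dvis Act P \<mu> y s = \<mu> s + (\<Sum>h. stepdist Act P \<mu> y (Suc h) s)"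
  unfolding dvis_def using suminf_split_head[OF summable_stepdist] by simp

lemma dvis_fixpoint:
  "dvis Act P \<mu> y s' = \<mu> s' + (\<Sum>s\<in>UNIV. dvis Act P \<mu> y s * Ppi Act P y s s')"
proof -
  have "(\<Sum>h. stepdist Act P \<mu> y (Suc h) s') = (\<Sum>s\<in>UNIV. dvis Act P \<mu> y s * Ppi Act P y s s')"
    unfolding stepdist.simps dvis_def
    by (subst suminf_sum) (auto intro!: summable_mult2 summable_stepdist simp: suminf_mult2[OF summable_stepdist])
  then show ?thesis by (simp add: dvis_split_head)
qed

lemma Vval_eq_sum_dvis:
  "Vval Act P R \<rho> y i = (\<Sum>s\<in>UNIV. dvis Act P \<rho> y s * expected_reward Act R y i s)"
  unfolding Vval_def dvis_def expected_reward_def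
  by (subst suminf_sum) (auto intro!: summable_mult2 summable_stepdist simp: suminf_mult2[OF summable_stepdist])

lemma state_value_bellman:
  "state_value Act P y f s0 = f s0 + (\<Sum>s'\<in>UNIV. Ppi Act P y s0 s' * state_value Act P y f s')"
proof -
  have first_step: "dvis Act P (indicator {s0}) y s
      = indicator {s0} s + (\<Sum>s'\<in>UNIV. Ppi Act P y s0 s' * dvis Act P (indicator {s'}) y s)" for s
  proof -
    have "(\<Sum>h. stepdist Act P (indicator {s0}) y (Suc h) s)
        = (\<Sum>s'\<in>UNIV. Ppi Act P y s0 s' * dvis Act P (indicator {s'}) y s)"
      unfolding stepdist_indicator_Suc dvis_def
      by (subst suminf_sum) (auto intro!: summable_mult summable_stepdist simp: suminf_mult[OF summable_stepdist])
    then show ?thesis by (simp add: dvis_split_head)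
  qed
  show ?thesis
    unfolding state_value_def first_step
    by (simp add: distrib_right sum.distrib sum_distrib_left sum_distrib_right mult.assoc
        indicator_def if_distrib cong: if_cong) (rule sum.swap)
qed

end

(* D is the occupation measure of the kernel M' started at mu and w the value of f under M:
   the algebraic core of the performance difference lemma. *)
lemma fixpoint_pairing_eq:
  fixes D \<mu> w f :: "'s::finite \<Rightarrow> real"
  assumes D: "\<And>s'. D s' = \<mu> s' + (\<Sum>s\<in>UNIV. D s * M' s s')"
    and w: "\<And>s. w s = f s + (\<Sum>s'\<in>UNIV. M s s' * w s')"
  shows "(\<Sum>s\<in>UNIV. D s * f s)
       = (\<Sum>s\<in>UNIV. \<mu> s * w s) + (\<Sum>s\<in>UNIV. D s * (\<Sum>s'\<in>UNIV. (M' s s' - M s s') * w s'))"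
proof -
  have "(\<Sum>s\<in>UNIV. D s * f s) = (\<Sum>s\<in>UNIV. D s * w s) - (\<Sum>s\<in>UNIV. D s * (\<Sum>s'\<in>UNIV. M s s' * w s'))"
  proof -
    have "f s = w s - (\<Sum>s'\<in>UNIV. M s s' * w s')" for s using w[of s] by linarith
    then show ?thesis by (simp only: right_diff_distrib sum_subtractf)
  qed
  also have "(\<Sum>s\<in>UNIV. D s * w s) = (\<Sum>s\<in>UNIV. \<mu> s * w s) + (\<Sum>s'\<in>UNIV. (\<Sum>s\<in>UNIV. D s * M' s s') * w s')"
    by (subst (1) D) (simp add: algebra_simps sum.distrib)
  also have "(\<Sum>s'\<in>UNIV. (\<Sum>s\<in>UNIV. D s * M' s s') * w s') = (\<Sum>s\<in>UNIV. D s * (\<Sum>s'\<in>UNIV. M' s s' * w s'))"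
    by (simp add: sum_distrib_right sum_distrib_left mult.assoc) (rule sum.swap)
  finally show ?thesis
    by (simp add: algebra_simps sum_subtractf sum.distrib right_diff_distrib)
qed

lemma resolvent_identity_deriv:
  fixes V D :: "real \<Rightarrow> real"
  assumes \<delta>: "0 < \<delta>"
    and V: "\<And>t. \<bar>t\<bar> < \<delta> \<Longrightarrow> V t = V 0 + D t * (t * c)"
    and D: "\<And>t. \<bar>t\<bar> < \<delta> \<Longrightarrow> D t = D 0 + D t * (t * k)"
  shows "deriv V 0 = D 0 * c"
proof -
  define \<delta>' where "\<delta>' = min \<delta> (1 / (\<bar>k\<bar> + 1))"
  have "0 < \<delta>'" unfolding \<delta>'_def using \<delta> by (simp add: add_pos_nonneg)
  have V_rational: "V 0 + D 0 / (1 - t * k) * (t * c) = V t" if "t \<in> ball 0 \<delta>'" for t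
  proof -
    have "\<bar>t\<bar> < \<delta>" and "\<bar>t\<bar> * (\<bar>k\<bar> + 1) < 1"
      using that unfolding \<delta>'_def by (auto simp: less_divide_eq)
    then have "\<bar>t * k\<bar> < 1" by (simp add: abs_mult algebra_simps)
    then have "1 - t * k \<noteq> 0" by auto
    moreover have "D t * (1 - t * k) = D t - D t * (t * k)" by (simp add: algebra_simps)
    then have "D t * (1 - t * k) = D 0" using D[OF \<open>\<bar>t\<bar> < \<delta>\<close>] by linarith
    ultimately have "D t = D 0 / (1 - t * k)" by (simp add: field_simps)
    then show ?thesis using V[OF \<open>\<bar>t\<bar> < \<delta>\<close>] by simp
  qed
  have "((\<lambda>t. V 0 + D 0 / (1 - t * k) * (t * c)) has_field_derivative D 0 * c) (at 0)"
    by (auto intro!: derivative_eq_intros simp: field_simps)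
  then have "(V has_field_derivative D 0 * c) (at 0)"
    by (rule has_field_derivative_transform_within_open[OF _ open_ball[of 0 \<delta>']])
      (use \<open>0 < \<delta>'\<close> V_rational in auto)
  then show ?thesis by (rule DERIV_imp_deriv)
qed

definition expect_others ::
  "('p::finite \<Rightarrow> 'a set) \<Rightarrow> ('p \<Rightarrow> 's \<Rightarrow> 'a \<Rightarrow> real)
    \<Rightarrow> 'p \<Rightarrow> 's \<Rightarrow> 'a \<Rightarrow> (('p \<Rightarrow> 'a) \<Rightarrow> real) \<Rightarrow> real"
  where "expect_others Act x i s b G = (\<Sum>a\<in>{a\<in>joint Act. a i = b}. (\<Prod>j\<in>UNIV-{i}. x j s (a j)) * G a)"

lemma expect_others_add:
  "expect_others Act x i s b G + expect_others Act x i s b H = expect_others Act x i s b (\<lambda>a. G a + H a)"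
  unfolding expect_others_def by (simp add: distrib_left sum.distrib)

lemma pol_fun_upd: "pol (x(i := z)) s a = z s (a i) * (\<Prod>j\<in>UNIV-{i}. x j s (a j))"
  unfolding pol_def by (subst prod.remove[of UNIV i]) (auto intro!: prod.cong)

lemma pol_nonneg: "x \<in> policies Act \<Longrightarrow> 0 \<le> pol x s a"
  unfolding pol_def policies_def by (auto intro: prod_nonneg)

lemma fun_upd_in_policies: "x \<in> policies Act \<Longrightarrow> y \<in> policies Act \<Longrightarrow> x(i := y i) \<in> policies Act"
  unfolding policies_def by auto

lemma sum_coordinate_perturbation:
  fixes t :: real
  assumes "finite A" and "ai \<in> A"
  shows "(\<Sum>s\<in>UNIV. D s * (\<Sum>b\<in>A. ((u(s0 := (u s0)(ai := u s0 ai + t))) s b - u s b) * Q s b))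
       = D (s0::'s::finite) * (t * Q s0 ai)"
proof -
  have "((u(s0 := (u s0)(ai := u s0 ai + t))) s b - u s b) * Q s b
      = (if b = ai then if s = s0 then t * Q s0 ai else 0 else 0)" for s b
    by auto
  then have "(\<Sum>b\<in>A. ((u(s0 := (u s0)(ai := u s0 ai + t))) s b - u s b) * Q s b)
      = (if s = s0 then t * Q s0 ai else 0)" for s
    using assms by (simp add: sum.delta)
  then show ?thesis by (simp add: if_distrib[where f="\<lambda>v. _ * v"] cong: if_cong)
qed

definition Qfun ::
  "('p::finite \<Rightarrow> 'a set) \<Rightarrow> ('s::finite \<Rightarrow> ('p \<Rightarrow> 'a) \<Rightarrow> 's \<Rightarrow> real)
    \<Rightarrow> ('p \<Rightarrow> 's \<Rightarrow> ('p \<Rightarrow> 'a) \<Rightarrow> real) \<Rightarrow> ('p \<Rightarrow> 's \<Rightarrow> 'a \<Rightarrow> real) \<Rightarrow> 'p \<Rightarrow> 's \<Rightarrow> 'a \<Rightarrow> real" where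
  "Qfun Act P R x i s b = expect_others Act x i s b
     (\<lambda>a. R i s a + (\<Sum>s'\<in>UNIV. P s a s' * state_value Act P x (expected_reward Act R x i) s'))"

locale terminating_game =
  fixes Act :: "'p::finite \<Rightarrow> 'a set"
    and P :: "'s::finite \<Rightarrow> ('p \<Rightarrow> 'a) \<Rightarrow> 's \<Rightarrow> real"
    and \<zeta> :: real
  assumes finite_Act: "finite (Act i)"
    and Act_nonempty: "Act i \<noteq> {}"
    and P_nonneg: "a \<in> joint Act \<Longrightarrow> 0 \<le> P s a s'"
    and P_row_sum_le: "a \<in> joint Act \<Longrightarrow> (\<Sum>s'\<in>UNIV. P s a s') \<le> 1 - \<zeta>"
    and \<zeta>_pos: "0 < \<zeta>"

lemma markov_game_imp_terminating_game:
  assumes "markov_game Act P R \<rho>"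
  obtains \<zeta> where "terminating_game Act P \<zeta>"
proof -
  obtain \<zeta> where "\<zeta> > 0" and "\<forall>s a. a \<in> joint Act \<longrightarrow> 1 - (\<Sum>s'\<in>UNIV. P s a s') \<ge> \<zeta>"
    using assms unfolding markov_game_def by auto
  with assms have "terminating_game Act P \<zeta>"
    unfolding markov_game_def terminating_game_def by (smt (verit))
  then show thesis ..
qed

context terminating_game
begin

lemma finite_joint: "finite (joint Act)"
  unfolding joint_def using finite_Act by (auto intro!: finite_PiE)

lemma joint_nonempty: "joint Act \<noteq> {}"
  unfolding joint_def using Act_nonempty by (auto simp: PiE_eq_empty_iff)

lemma \<zeta>_le_1: "\<zeta> \<le> 1"
proof -
  obtain a where a: "a \<in> joint Act" using joint_nonempty by auto
  have "0 \<le> (\<Sum>s'\<in>UNIV. P s a s')" using P_nonneg[OF a] by (auto intro: sum_nonneg)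
  then show ?thesis using P_row_sum_le[OF a, of s] by linarith
qed

lemma sum_pol_fun_upd:
  "(\<Sum>a\<in>joint Act. pol (x(i := z)) s a * G a) = (\<Sum>b\<in>Act i. z s b * expect_others Act x i s b G)"
proof -
  have "(\<Sum>a\<in>joint Act. pol (x(i := z)) s a * G a)
      = (\<Sum>b\<in>Act i. \<Sum>a\<in>{a\<in>joint Act. a i = b}. z s (a i) * ((\<Prod>j\<in>UNIV-{i}. x j s (a j)) * G a))"
    unfolding pol_fun_upd mult.assoc
    by (rule sum.group[symmetric]) (use finite_Act finite_joint in \<open>auto simp: joint_def\<close>)
  then show ?thesis
    unfolding expect_others_def sum_distrib_left by simp
qed

lemma sum_pol_fun_upd_diff:
  "(\<Sum>a\<in>joint Act. (pol (x(i := z)) s a - pol x s a) * G a)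
     = (\<Sum>b\<in>Act i. (z s b - x i s b) * expect_others Act x i s b G)"
  using sum_pol_fun_upd[of x i z s G] sum_pol_fun_upd[of x i "x i" s G]
  by (simp add: left_diff_distrib sum_subtractf)

lemma expect_others_const:
  assumes x: "x \<in> policies Act" and b: "b \<in> Act i"
    and G: "\<And>a. a \<in> joint Act \<Longrightarrow> a i = b \<Longrightarrow> G a = h"
  shows "expect_others Act x i s b G = h"
proof -
  let ?g = "(\<lambda>j. x j s)(i := (\<lambda>_. 1))"
  have fiber: "{a\<in>joint Act. a i = b} = PiE UNIV (Act(i := {b}))"
    using b unfolding joint_def by (auto simp: PiE_iff split: if_splits)
  have "expect_others Act x i s b G = h * (\<Sum>a\<in>PiE UNIV (Act(i := {b})). \<Prod>j\<in>UNIV. ?g j (a j))"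
    unfolding expect_others_def sum_distrib_left fiber[symmetric] using G
    by (intro sum.cong refl) (auto simp: prod.remove[of UNIV i] intro!: prod.cong)
  also have "\<dots> = h * (\<Prod>j\<in>UNIV. \<Sum>b'\<in>(Act(i := {b})) j. ?g j b')"
    by (subst prod_sum_PiE) (use finite_Act in auto)
  also have "(\<Prod>j\<in>UNIV. \<Sum>b'\<in>(Act(i := {b})) j. ?g j b') = 1"
    using x by (intro prod.neutral) (auto simp: policies_def)
  finally show ?thesis by simp
qed

lemma abs_pol_fun_upd_sum:
  assumes "x \<in> policies Act"
  shows "(\<Sum>a\<in>joint Act. \<bar>pol (x(i := z)) s a\<bar>) = (\<Sum>b\<in>Act i. \<bar>z s b\<bar>)"
proof -
  have "\<bar>pol (x(i := z)) s a\<bar> = pol (x(i := \<lambda>s b. \<bar>z s b\<bar>)) s a" for a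
    using assms unfolding pol_def abs_prod by (intro prod.cong) (auto simp: policies_def)
  then have "(\<Sum>a\<in>joint Act. \<bar>pol (x(i := z)) s a\<bar>)
      = (\<Sum>b\<in>Act i. \<bar>z s b\<bar> * expect_others Act x i s b (\<lambda>_. 1))"
    using sum_pol_fun_upd[of x i "\<lambda>s b. \<bar>z s b\<bar>" s "\<lambda>_. 1"] by simp
  also have "\<dots> = (\<Sum>b\<in>Act i. \<bar>z s b\<bar>)"
    by (intro sum.cong refl) (simp add: expect_others_const[OF assms])
  finally show ?thesis .
qed

lemma Ppi_perturbed_abs_row_le:
  assumes "x \<in> policies Act" and "\<And>s. (\<Sum>b\<in>Act i. \<bar>z s b\<bar>) \<le> 1 + \<zeta>/2"
  shows "(\<Sum>s'\<in>UNIV. \<bar>Ppi Act P (x(i := z)) s s'\<bar>) \<le> 1 - \<zeta>/2"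
proof -
  let ?y = "x(i := z)"
  have "(\<Sum>s'\<in>UNIV. \<bar>Ppi Act P ?y s s'\<bar>) \<le> (\<Sum>s'\<in>UNIV. \<Sum>a\<in>joint Act. \<bar>pol ?y s a\<bar> * P s a s')"
    unfolding Ppi_def using P_nonneg
    by (intro sum_mono order.trans[OF sum_abs]) (auto simp: abs_mult intro!: sum_mono)
  also have "\<dots> = (\<Sum>a\<in>joint Act. \<bar>pol ?y s a\<bar> * (\<Sum>s'\<in>UNIV. P s a s'))"
    by (subst sum.swap) (simp add: sum_distrib_left)
  also have "\<dots> \<le> (\<Sum>a\<in>joint Act. \<bar>pol ?y s a\<bar> * (1 - \<zeta>))"
    using P_row_sum_le by (intro sum_mono mult_left_mono) auto
  also have "\<dots> = (\<Sum>b\<in>Act i. \<bar>z s b\<bar>) * (1 - \<zeta>)"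
    by (simp add: sum_distrib_right[symmetric] abs_pol_fun_upd_sum[OF assms(1)])
  also have "\<dots> \<le> (1 + \<zeta>/2) * (1 - \<zeta>)"
    using \<zeta>_le_1 assms(2) by (intro mult_right_mono) auto
  also have "\<dots> \<le> 1 - \<zeta>/2" using \<zeta>_pos by (simp add: algebra_simps)
  finally show ?thesis .
qed

lemma policy_abs_sum_le: "x \<in> policies Act \<Longrightarrow> (\<Sum>b\<in>Act i. \<bar>x i s b\<bar>) \<le> 1 + \<zeta>/2"
  using \<zeta>_pos by (simp add: policies_def)

lemma Ppi_abs_row_le:
  assumes "x \<in> policies Act"
  shows "(\<Sum>s'\<in>UNIV. \<bar>Ppi Act P x s s'\<bar>) \<le> 1 - \<zeta>/2"
proof -
  have "(\<Sum>s'\<in>UNIV. \<bar>Ppi Act P (x(i := x i)) s s'\<bar>) \<le> 1 - \<zeta>/2" for i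
    by (rule Ppi_perturbed_abs_row_le[OF assms]) (rule policy_abs_sum_le[OF assms])
  then show ?thesis by simp
qed

lemma contraction_factor: "0 \<le> 1 - \<zeta>/2" "1 - \<zeta>/2 < 1"
  using \<zeta>_le_1 \<zeta>_pos by auto

lemma coordinate_perturbation_abs_sum_le:
  assumes "x \<in> policies Act" and "\<bar>t\<bar> \<le> \<zeta>/2"
  shows "(\<Sum>b\<in>Act i. \<bar>((x i)(s0 := (x i s0)(ai := x i s0 ai + t))) s b\<bar>) \<le> 1 + \<zeta>/2"
proof -
  have "(\<Sum>b\<in>Act i. \<bar>((x i)(s0 := (x i s0)(ai := x i s0 ai + t))) s b\<bar>)
      \<le> (\<Sum>b\<in>Act i. x i s b + (if b = ai then \<bar>t\<bar> else 0))"
    using assms(1) by (intro sum_mono) (auto simp: policies_def split: abs_split)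
  also have "\<dots> \<le> 1 + \<bar>t\<bar>"
    using assms(1) finite_Act by (simp add: sum.distrib policies_def sum.delta)
  finally show ?thesis using assms(2) by linarith
qed

lemma sum_Ppi_fun_upd_diff:
  "(\<Sum>s'\<in>UNIV. (Ppi Act P (x(i := z)) s s' - Ppi Act P x s s') * w s')
     = (\<Sum>b\<in>Act i. (z s b - x i s b) * expect_others Act x i s b (\<lambda>a. \<Sum>s'\<in>UNIV. P s a s' * w s'))"
proof -
  have "(\<Sum>s'\<in>UNIV. (Ppi Act P (x(i := z)) s s' - Ppi Act P x s s') * w s')
      = (\<Sum>s'\<in>UNIV. \<Sum>a\<in>joint Act. (pol (x(i := z)) s a - pol x s a) * (P s a s' * w s'))"
    unfolding Ppi_def sum_subtractf[symmetric] sum_distrib_right by (simp add: algebra_simps)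
  also have "\<dots> = (\<Sum>a\<in>joint Act. (pol (x(i := z)) s a - pol x s a) * (\<Sum>s'\<in>UNIV. P s a s' * w s'))"
    by (subst sum.swap) (simp add: sum_distrib_left)
  finally show ?thesis by (simp add: sum_pol_fun_upd_diff)
qed

lemma sum_dvis_eq_sum_state_value:
  assumes x: "x \<in> policies Act"
  shows "(\<Sum>s\<in>UNIV. dvis Act P \<mu> x s * f s) = (\<Sum>s\<in>UNIV. \<mu> s * state_value Act P x f s)"
proof -
  have D: "dvis Act P \<mu> x s' = \<mu> s' + (\<Sum>s\<in>UNIV. dvis Act P \<mu> x s * Ppi Act P x s s')" for s'
    by (rule dvis_fixpoint[OF Ppi_abs_row_le[OF x] contraction_factor])
  have w: "state_value Act P x f s = f s + (\<Sum>s'\<in>UNIV. Ppi Act P x s s' * state_value Act P x f s')" for s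
    by (rule state_value_bellman[OF Ppi_abs_row_le[OF x] contraction_factor])
  from fixpoint_pairing_eq[OF D w] show ?thesis by simp
qed

lemma sum_dvis_fun_upd_eq:
  assumes x: "x \<in> policies Act" and z: "\<And>s. (\<Sum>b\<in>Act i. \<bar>z s b\<bar>) \<le> 1 + \<zeta>/2"
  shows "(\<Sum>s\<in>UNIV. dvis Act P \<mu> (x(i := z)) s * f s) = (\<Sum>s\<in>UNIV. dvis Act P \<mu> x s * f s)
     + (\<Sum>s\<in>UNIV. dvis Act P \<mu> (x(i := z)) s * (\<Sum>b\<in>Act i. (z s b - x i s b) *
          expect_others Act x i s b (\<lambda>a. \<Sum>s'\<in>UNIV. P s a s' * state_value Act P x f s')))"
proof -
  have D: "dvis Act P \<mu> (x(i := z)) s'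
      = \<mu> s' + (\<Sum>s\<in>UNIV. dvis Act P \<mu> (x(i := z)) s * Ppi Act P (x(i := z)) s s')" for s'
    by (rule dvis_fixpoint[OF Ppi_perturbed_abs_row_le[OF x z] contraction_factor])
  have w: "state_value Act P x f s = f s + (\<Sum>s'\<in>UNIV. Ppi Act P x s s' * state_value Act P x f s')" for s
    by (rule state_value_bellman[OF Ppi_abs_row_le[OF x] contraction_factor])
  from fixpoint_pairing_eq[OF D w] show ?thesis
    by (simp add: sum_dvis_eq_sum_state_value[OF x] sum_Ppi_fun_upd_diff)
qed

lemma Qfun_eq:
  "Qfun Act P R x i s b = expect_others Act x i s b (R i s)
     + expect_others Act x i s b (\<lambda>a. \<Sum>s'\<in>UNIV. P s a s' * state_value Act P x (expected_reward Act R x i) s')"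
  unfolding Qfun_def expect_others_add ..

lemma Vval_fun_upd_eq:
  assumes x: "x \<in> policies Act" and z: "\<And>s. (\<Sum>b\<in>Act i. \<bar>z s b\<bar>) \<le> 1 + \<zeta>/2"
  shows "Vval Act P R \<rho> (x(i := z)) i = Vval Act P R \<rho> x i
     + (\<Sum>s\<in>UNIV. dvis Act P \<rho> (x(i := z)) s * (\<Sum>b\<in>Act i. (z s b - x i s b) * Qfun Act P R x i s b))"
proof -
  let ?y = "x(i := z)"
  have reward_diff: "expected_reward Act R ?y i s = expected_reward Act R x i s
      + (\<Sum>b\<in>Act i. (z s b - x i s b) * expect_others Act x i s b (R i s))" for s
    using sum_pol_fun_upd_diff[of x i z s "R i s"]
    unfolding expected_reward_def by (simp add: left_diff_distrib sum_subtractf)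
  let ?EO = "\<lambda>G s. \<Sum>b\<in>Act i. (z s b - x i s b) * expect_others Act x i s b (G s)"
  let ?future = "\<lambda>s a. \<Sum>s'\<in>UNIV. P s a s' * state_value Act P x (expected_reward Act R x i) s'"
  have "Vval Act P R \<rho> ?y i = (\<Sum>s\<in>UNIV. dvis Act P \<rho> ?y s * expected_reward Act R ?y i s)"
    by (rule Vval_eq_sum_dvis[OF Ppi_perturbed_abs_row_le[OF x z] contraction_factor])
  moreover have "(\<Sum>s\<in>UNIV. dvis Act P \<rho> ?y s * expected_reward Act R ?y i s)
      = (\<Sum>s\<in>UNIV. dvis Act P \<rho> ?y s * expected_reward Act R x i s)
      + (\<Sum>s\<in>UNIV. dvis Act P \<rho> ?y s * ?EO (\<lambda>s. R i s) s)"
    by (simp add: reward_diff distrib_left sum.distrib)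
  moreover have "(\<Sum>s\<in>UNIV. dvis Act P \<rho> ?y s * expected_reward Act R x i s)
      = Vval Act P R \<rho> x i + (\<Sum>s\<in>UNIV. dvis Act P \<rho> ?y s * ?EO ?future s)"
    by (subst Vval_eq_sum_dvis[OF Ppi_abs_row_le[OF x] contraction_factor]) (rule sum_dvis_fun_upd_eq[OF x z])
  moreover have "(\<Sum>s\<in>UNIV. dvis Act P \<rho> ?y s * (\<Sum>b\<in>Act i. (z s b - x i s b) * Qfun Act P R x i s b))
      = (\<Sum>s\<in>UNIV. dvis Act P \<rho> ?y s * ?EO (\<lambda>s. R i s) s) + (\<Sum>s\<in>UNIV. dvis Act P \<rho> ?y s * ?EO ?future s)"
    by (simp add: Qfun_eq distrib_left sum.distrib)
  ultimately show ?thesis by linarith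
qed

lemma Fgrad_eq_neg_dvis_Qfun:
  assumes x: "x \<in> policies Act" and ai: "ai \<in> Act i"
  shows "Fgrad Act P R \<rho> x i s0 ai = - (dvis Act P \<rho> x s0 * Qfun Act P R x i s0 ai)"
proof -
  define z where "z t = (x i)(s0 := (x i s0)(ai := x i s0 ai + t))" for t
  define q where "q s b = expect_others Act x i s b
    (\<lambda>a. \<Sum>s'\<in>UNIV. P s a s' * state_value Act P x (indicator {s0}) s')" for s b
  have x0: "x(i := z 0) = x" unfolding z_def by auto
  have z_bound: "\<And>s. (\<Sum>b\<in>Act i. \<bar>z t s b\<bar>) \<le> 1 + \<zeta>/2" if "\<bar>t\<bar> < \<zeta>/2" for t
    unfolding z_def using coordinate_perturbation_abs_sum_le[OF x] that by simp
  have V: "Vval Act P R \<rho> (x(i := z t)) i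
      = Vval Act P R \<rho> (x(i := z 0)) i + dvis Act P \<rho> (x(i := z t)) s0 * (t * Qfun Act P R x i s0 ai)"
    if "\<bar>t\<bar> < \<zeta>/2" for t
    using Vval_fun_upd_eq[where z = "z t", OF x z_bound[OF that]]
    unfolding x0 unfolding z_def sum_coordinate_perturbation[OF finite_Act ai] .
  have D: "dvis Act P \<rho> (x(i := z t)) s0
      = dvis Act P \<rho> (x(i := z 0)) s0 + dvis Act P \<rho> (x(i := z t)) s0 * (t * q s0 ai)"
    if "\<bar>t\<bar> < \<zeta>/2" for t
    using sum_dvis_fun_upd_eq[where z = "z t" and \<mu> = \<rho> and f = "indicator {s0}", OF x z_bound[OF that]]
    unfolding x0 q_def[symmetric] unfolding z_def sum_coordinate_perturbation[OF finite_Act ai] by simp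
  have "deriv (\<lambda>t. Vval Act P R \<rho> (x(i := z t)) i) 0
      = dvis Act P \<rho> (x(i := z 0)) s0 * Qfun Act P R x i s0 ai"
    using \<zeta>_pos
    by (intro resolvent_identity_deriv[where \<delta> = "\<zeta>/2" and D = "\<lambda>t. dvis Act P \<rho> (x(i := z t)) s0",
          OF _ V D]) auto
  then show ?thesis unfolding Fgrad_def z_def x0[unfolded z_def] by simp
qed

lemma Ppi_nonneg: "x \<in> policies Act \<Longrightarrow> 0 \<le> Ppi Act P x s s'"
  unfolding Ppi_def using P_nonneg pol_nonneg by (auto intro!: sum_nonneg mult_nonneg_nonneg)

lemma dvis_pos:
  assumes x: "x \<in> policies Act" and \<mu>: "\<And>s. 0 < \<mu> s"
  shows "0 < dvis Act P \<mu> x s"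
proof -
  have "0 \<le> stepdist Act P \<mu> x h s" for h s
    using less_imp_le[OF \<mu>]
    by (induction h arbitrary: s) (auto intro!: sum_nonneg mult_nonneg_nonneg Ppi_nonneg[OF x])
  then have "0 \<le> dvis Act P \<mu> x s" for s
    unfolding dvis_def by (intro suminf_nonneg summable_stepdist[OF Ppi_abs_row_le[OF x] contraction_factor])
  then have "0 \<le> (\<Sum>s'\<in>UNIV. dvis Act P \<mu> x s' * Ppi Act P x s' s)"
    by (auto intro!: sum_nonneg mult_nonneg_nonneg Ppi_nonneg[OF x])
  then show ?thesis
    using dvis_fixpoint[OF Ppi_abs_row_le[OF x] contraction_factor, of \<mu> s] \<mu>[of s] by linarith
qed

lemma gradient_pairing_eq_Vval_diff:
  assumes x: "x \<in> policies Act" and xs: "xs \<in> policies Act" and \<rho>: "\<And>s. 0 < \<rho> s"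
  shows "(\<Sum>s\<in>UNIV. \<Sum>ai\<in>Act i. (x i s ai - xs i s ai) * (Fgrad Act P R \<rho> x i s ai * Lam Act P \<rho> x xs i s ai))
       = Vval Act P R \<rho> (x(i := xs i)) i - Vval Act P R \<rho> x i"
proof -
  have "(x i s ai - xs i s ai) * (Fgrad Act P R \<rho> x i s ai * Lam Act P \<rho> x xs i s ai)
      = dvis Act P \<rho> (x(i := xs i)) s * ((xs i s ai - x i s ai) * Qfun Act P R x i s ai)"
    if "ai \<in> Act i" for s ai
    using dvis_pos[where \<mu> = \<rho>, OF x \<rho>, of s]
    unfolding Fgrad_eq_neg_dvis_Qfun[OF x that] Lam_def by (simp add: field_simps)
  then have "(\<Sum>s\<in>UNIV. \<Sum>ai\<in>Act i. (x i s ai - xs i s ai) * (Fgrad Act P R \<rho> x i s ai * Lam Act P \<rho> x xs i s ai))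
      = (\<Sum>s\<in>UNIV. dvis Act P \<rho> (x(i := xs i)) s * (\<Sum>ai\<in>Act i. (xs i s ai - x i s ai) * Qfun Act P R x i s ai))"
    by (simp add: sum_distrib_left)
  also have "\<dots> = Vval Act P R \<rho> (x(i := xs i)) i - Vval Act P R \<rho> x i"
    using Vval_fun_upd_eq[OF x policy_abs_sum_le[OF xs]] by simp
  finally show ?thesis .
qed

lemma Ppi_single_controller_cong:
  assumes sc: "single_controller Act P c"
    and x: "x \<in> policies Act" and y: "y \<in> policies Act" and xy: "x c = y c"
  shows "Ppi Act P x = Ppi Act P y"
proof (intro ext)
  fix s s'
  obtain a0 where a0: "a0 \<in> joint Act" using joint_nonempty by auto
  have "Ppi Act P w s s' = (\<Sum>b\<in>Act c. w c s b * P s (a0(c := b)) s')" if w: "w \<in> policies Act" for w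
  proof -
    have "expect_others Act w c s b (\<lambda>a. P s a s') = P s (a0(c := b)) s'" if b: "b \<in> Act c" for b
    proof (rule expect_others_const[OF w b])
      fix a assume "a \<in> joint Act" and "a c = b"
      moreover have "a0(c := b) \<in> joint Act" using a0 b by (auto simp: joint_def)
      ultimately have "P s a = P s (a0(c := b))"
        using sc unfolding single_controller_def by (metis fun_upd_same)
      then show "P s a s' = P s (a0(c := b)) s'" by simp
    qed
    then show ?thesis
      using sum_pol_fun_upd[of w c "w c" s "\<lambda>a. P s a s'"] unfolding Ppi_def by simp
  qed
  then show "Ppi Act P x s s' = Ppi Act P y s s'" using x y xy by simp
qed

lemma dvis_single_controller_cong:
  assumes "single_controller Act P c" and "x \<in> policies Act" and "y \<in> policies Act" and "x c = y c"
  shows "dvis Act P \<mu> x = dvis Act P \<mu> y"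
  using stepdist_cong[OF Ppi_single_controller_cong[OF assms]] unfolding dvis_def[abs_def] by simp

lemma single_controller_Aw_Ww_eq_Lam:
  assumes sc: "single_controller Act P c"
    and x: "x \<in> policies Act" and xs: "xs \<in> policies Act" and \<rho>: "\<And>s. 0 < \<rho> s"
  shows "Aw Act P \<rho> c x i s ai * Ww Act P \<rho> c xs i s ai = Lam Act P \<rho> x xs i s ai"
proof (cases "i = c")
  case True
  then have "dvis Act P \<rho> (x(i := xs i)) = dvis Act P \<rho> xs"
    by (intro dvis_single_controller_cong[OF sc fun_upd_in_policies[OF x xs] xs]) simp
  then show ?thesis using True unfolding Aw_def Ww_def Lam_def by simp
next
  case False
  then have "dvis Act P \<rho> (x(i := xs i)) = dvis Act P \<rho> x"
    by (intro dvis_single_controller_cong[OF sc fun_upd_in_policies[OF x xs] x]) simp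
  then show ?thesis using False dvis_pos[where \<mu> = \<rho>, OF x \<rho>, of s] unfolding Aw_def Ww_def Lam_def by simp
qed

end

theorem lemma1:
  fixes Act :: "'p::finite \<Rightarrow> 'a set"
    and P :: "'s::finite \<Rightarrow> ('p \<Rightarrow> 'a) \<Rightarrow> 's \<Rightarrow> real"
    and R :: "'p \<Rightarrow> 's \<Rightarrow> ('p \<Rightarrow> 'a) \<Rightarrow> real"
    and \<rho> :: "'s \<Rightarrow> real"
    and xs :: "'p \<Rightarrow> 's \<Rightarrow> 'a \<Rightarrow> real"
  assumes game: "markov_game Act P R \<rho>"
    and xs_pol: "xs \<in> policies Act"
    and hyp: "\<forall>x\<in>policies Act.
       (\<Sum>i\<in>UNIV. Vval Act P R \<rho> (x(i := xs i)) i) - (\<Sum>i\<in>UNIV. Vval Act P R \<rho> x i) \<ge> 0"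
  shows "(\<forall>x\<in>policies Act.
           (\<Sum>i\<in>UNIV. \<Sum>s\<in>UNIV. \<Sum>ai\<in>Act i.
              (x i s ai - xs i s ai) * (Fgrad Act P R \<rho> x i s ai * Lam Act P \<rho> x xs i s ai)) \<ge> 0)
       \<and> (\<forall>c. single_controller Act P c \<longrightarrow>
           (\<forall>x\<in>policies Act.
             (\<Sum>i\<in>UNIV. \<Sum>s\<in>UNIV. \<Sum>ai\<in>Act i.
                (x i s ai - xs i s ai) *
                (Fgrad Act P R \<rho> x i s ai * Aw Act P \<rho> c x i s ai * Ww Act P \<rho> c xs i s ai)) \<ge> 0))"
proof -
  obtain \<zeta> where "terminating_game Act P \<zeta>"
    using markov_game_imp_terminating_game[OF game] .
  then interpret terminating_game Act P \<zeta> .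
  have \<rho>_pos: "\<And>s. 0 < \<rho> s" using game by (simp add: markov_game_def)
  have weighted: "(\<Sum>i\<in>UNIV. \<Sum>s\<in>UNIV. \<Sum>ai\<in>Act i.
      (x i s ai - xs i s ai) * (Fgrad Act P R \<rho> x i s ai * Lam Act P \<rho> x xs i s ai)) \<ge> 0"
    if x: "x \<in> policies Act" for x
    using hyp x
    by (simp add: gradient_pairing_eq_Vval_diff[where \<rho> = \<rho>, OF x xs_pol \<rho>_pos] sum_subtractf)
  moreover have "(\<Sum>i\<in>UNIV. \<Sum>s\<in>UNIV. \<Sum>ai\<in>Act i. (x i s ai - xs i s ai) *
      (Fgrad Act P R \<rho> x i s ai * Aw Act P \<rho> c x i s ai * Ww Act P \<rho> c xs i s ai)) \<ge> 0"
    if sc: "single_controller Act P c" and x: "x \<in> policies Act" for c x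
    using weighted[OF x]
    by (simp only: mult.assoc single_controller_Aw_Ww_eq_Lam[where \<rho> = \<rho>, OF sc x xs_pol \<rho>_pos])
  ultimately show ?thesis by blast
qed

end
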